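(* Let $H$ be a 2-dimensional non-abelian simply connected Lie group, $u,w$ a basis of left-invariant vector fields with $[u,w]=2u$, and for real $a,b$ with $ab=0$ let $\nabla=\nabla(a,b)$ be the left-invariant torsion-free connection on $H$ with $\nabla_u u=(3+a)u-aw$, $\nabla_u w=au+(3-a)w$, $\nabla_w u=(a-2)u+(3-a)w$, $\nabla_w w=(a+b-1)u+(2-a)w$. If a left-invariant symmetric 2-tensor on $H$ equals $\mathcal{L}\beta$ for some 1-form $\beta$ on $H$, then it also equals $\mathcal{L}\alpha$ for some left-invariant 1-form $\alpha$ on $H$.
   Context: All objects are $C^\infty$. $\mathcal{L}$ is the Killing operator of $\nabla$: $(\mathcal{L}\xi)(x,y)=\tfrac12[(\nabla_x\xi)(y)+(\nabla_y\xi)(x)]$ for 1-forms $\xi$. *)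

theory Defs
  imports "HOL-Analysis.Analysis"
begin

text \<open>Concrete model of the 2-dimensional simply connected non-abelian Lie group H:
  H = real \<times> real with product (x1,y1)(x2,y2) = (x1 + exp(2 y1) x2, y1 + y2).
  Left-invariant vector fields: u = exp(2y) d/dx, w = - d/dy; then [u,w] = 2u.\<close>

definition hmult :: "real \<times> real \<Rightarrow> real \<times> real \<Rightarrow> real \<times> real" where
  "hmult g h = (fst g + exp (2 * snd g) * fst h, snd g + snd h)"

definition px :: "(real \<times> real \<Rightarrow> real) \<Rightarrow> real \<times> real \<Rightarrow> real" where
  "px f p = frechet_derivative f (at p) (1, 0)"

definition py :: "(real \<times> real \<Rightarrow> real) \<Rightarrow> real \<times> real \<Rightarrow> real" where
  "py f p = frechet_derivative f (at p) (0, 1)"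

fun Ck :: "nat \<Rightarrow> (real \<times> real \<Rightarrow> real) \<Rightarrow> bool" where
  "Ck 0 f = continuous_on UNIV f"
| "Ck (Suc n) f = ((\<forall>p. f differentiable (at p)) \<and> Ck n (px f) \<and> Ck n (py f))"

definition smooth :: "(real \<times> real \<Rightarrow> real) \<Rightarrow> bool" where
  "smooth f = (\<forall>n. Ck n f)"

datatype frame = U | W

definition vf :: "frame \<Rightarrow> (real \<times> real \<Rightarrow> real) \<Rightarrow> real \<times> real \<Rightarrow> real" where
  "vf X f p = (case X of U \<Rightarrow> exp (2 * snd p) * px f p | W \<Rightarrow> - py f p)"

text \<open>The connection nabla(a,b): coefficients of nabla_X Y in the frame (u,w).\<close>
fun conn :: "real \<Rightarrow> real \<Rightarrow> frame \<Rightarrow> frame \<Rightarrow> real \<times> real" where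
  "conn a b U U = (3 + a, - a)"
| "conn a b U W = (a, 3 - a)"
| "conn a b W U = (a - 2, 3 - a)"
| "conn a b W W = (a + b - 1, 2 - a)"

text \<open>A 1-form is represented by its values on the global frame: beta X = beta(X).
  Covariant derivative (nabla_X beta)(Y) = X(beta(Y)) - beta(nabla_X Y).\<close>
definition covd :: "real \<Rightarrow> real \<Rightarrow> (frame \<Rightarrow> real \<times> real \<Rightarrow> real) \<Rightarrow> frame \<Rightarrow> frame \<Rightarrow> real \<times> real \<Rightarrow> real" where
  "covd a b \<beta> X Y p = vf X (\<beta> Y) p
     - (fst (conn a b X Y) * \<beta> U p + snd (conn a b X Y) * \<beta> W p)"

definition killing :: "real \<Rightarrow> real \<Rightarrow> (frame \<Rightarrow> real \<times> real \<Rightarrow> real) \<Rightarrow> frame \<Rightarrow> frame \<Rightarrow> real \<times> real \<Rightarrow> real" where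
  "killing a b \<beta> X Y p = (covd a b \<beta> X Y p + covd a b \<beta> Y X p) / 2"

end

theory Submission
  imports Defs
begin

text \<open>With \<open>f = \<beta>(u)\<close>, \<open>g = \<beta>(w)\<close>, the equation \<open>\<L>\<beta> = S\<close> is a first-order system of three
  linear PDEs in \<open>f, g\<close> with constant right-hand sides. Differentiating it and using the symmetry
  of mixed partials expresses \<open>f\<^sub>x\<^sub>y\<close>, \<open>f\<^sub>y\<^sub>y\<close> and then \<open>f\<^sub>y\<close> in terms of \<open>f, g\<close>; one more
  differentiation leaves two linear algebraic relations between \<open>f\<close> and \<open>g\<close> with constant
  coefficients, whose determinant is, for \<open>ab = 0\<close>, a nonzero multiple of \<open>5a + 45 + 3b\<close>. If it does
  not vanish, \<open>\<beta>\<close> is constant in the left-invariant frame. In the two exceptional cases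
  \<open>(a, b) = (0, -15)\<close> and \<open>(-9, 0)\<close> the relations yield a linear condition on \<open>S\<close>, which is exactly
  the condition for \<open>\<L>\<alpha> = S\<close> to have a constant solution \<open>\<alpha>\<close>.\<close>

lemma has_derivative_partials:
  assumes "F differentiable (at p)"
  shows "(F has_derivative (\<lambda>h. fst h * px F p + snd h * py F p)) (at p)"
proof -
  let ?D = "frechet_derivative F (at p)"
  have D: "(F has_derivative ?D) (at p)"
    using assms frechet_derivative_works by blast
  have "?D (h1, h2) = h1 * px F p + h2 * py F p" for h1 h2
  proof -
    have "?D (h1, h2) = ?D (h1 *\<^sub>R (1, 0) + h2 *\<^sub>R (0, 1))"
      by simp
    also have "\<dots> = h1 * ?D (1, 0) + h2 * ?D (0, 1)"
      using has_derivative_linear[OF D]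
      by (simp only: linear_add linear_cmul real_scaleR_def)
    finally show ?thesis
      by (simp add: px_def py_def)
  qed
  then have "?D = (\<lambda>h. fst h * px F p + snd h * py F p)"
    by auto
  with D show ?thesis
    by simp
qed

lemma has_real_derivative_px:
  assumes "F differentiable (at (x, y))"
  shows "((\<lambda>s. F (s, y)) has_real_derivative px F (x, y)) (at x)"
proof -
  have "((\<lambda>s. F (s, y)) has_derivative (\<lambda>h. fst (h, 0::real) * px F (x, y) + snd (h, 0::real) * py F (x, y))) (at x)"
    by (rule has_derivative_compose[where g = F and f = "\<lambda>s. (s, y)", OF _ has_derivative_partials[OF assms], simplified])
      (auto intro!: derivative_eq_intros)
  then show ?thesis
    unfolding has_field_derivative_def by (rule has_derivative_eq_rhs) (auto simp: fun_eq_iff)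
qed

lemma has_real_derivative_py:
  assumes "F differentiable (at (x, y))"
  shows "((\<lambda>s. F (x, s)) has_real_derivative py F (x, y)) (at y)"
proof -
  have "((\<lambda>s. F (x, s)) has_derivative (\<lambda>h. fst (0::real, h) * px F (x, y) + snd (0::real, h) * py F (x, y))) (at y)"
    by (rule has_derivative_compose[where g = F and f = "\<lambda>s. (x, s)", OF _ has_derivative_partials[OF assms], simplified])
      (auto intro!: derivative_eq_intros)
  then show ?thesis
    unfolding has_field_derivative_def by (rule has_derivative_eq_rhs) (auto simp: fun_eq_iff)
qed

lemma second_difference_py_px:
  fixes F :: "real \<times> real \<Rightarrow> real"
  assumes dF: "\<And>q. F differentiable (at q)" and dFx: "\<And>q. px F differentiable (at q)"
    and "t > 0"
  obtains \<xi> \<eta> where "x0 < \<xi>" "\<xi> < x0 + t" "y0 < \<eta>" "\<eta> < y0 + t"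
    and "F (x0 + t, y0 + t) - F (x0 + t, y0) - F (x0, y0 + t) + F (x0, y0) = t * (t * py (px F) (\<xi>, \<eta>))"
proof -
  have "\<exists>\<xi>. x0 < \<xi> \<and> \<xi> < x0 + t \<and> (F (x0 + t, y0 + t) - F (x0 + t, y0)) - (F (x0, y0 + t) - F (x0, y0))
      = ((x0 + t) - x0) * (px F (\<xi>, y0 + t) - px F (\<xi>, y0))"
    by (rule MVT2[where f = "\<lambda>s. F (s, y0 + t) - F (s, y0)"])
      (use \<open>t > 0\<close> in \<open>auto intro!: derivative_eq_intros has_real_derivative_px dF\<close>)
  then obtain \<xi> where "x0 < \<xi>" "\<xi> < x0 + t"
    and "(F (x0 + t, y0 + t) - F (x0 + t, y0)) - (F (x0, y0 + t) - F (x0, y0))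
      = t * (px F (\<xi>, y0 + t) - px F (\<xi>, y0))"
    by auto
  moreover have "\<exists>\<eta>. y0 < \<eta> \<and> \<eta> < y0 + t \<and>
      px F (\<xi>, y0 + t) - px F (\<xi>, y0) = ((y0 + t) - y0) * py (px F) (\<xi>, \<eta>)"
    by (rule MVT2) (use \<open>t > 0\<close> in \<open>auto intro!: has_real_derivative_py dFx\<close>)
  ultimately show ?thesis
    using that by (auto simp: algebra_simps)
qed

lemma second_difference_px_py:
  fixes F :: "real \<times> real \<Rightarrow> real"
  assumes dF: "\<And>q. F differentiable (at q)" and dFy: "\<And>q. py F differentiable (at q)"
    and "t > 0"
  obtains \<xi> \<eta> where "x0 < \<xi>" "\<xi> < x0 + t" "y0 < \<eta>" "\<eta> < y0 + t"
    and "F (x0 + t, y0 + t) - F (x0 + t, y0) - F (x0, y0 + t) + F (x0, y0) = t * (t * px (py F) (\<xi>, \<eta>))"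
proof -
  have "\<exists>\<eta>. y0 < \<eta> \<and> \<eta> < y0 + t \<and> (F (x0 + t, y0 + t) - F (x0, y0 + t)) - (F (x0 + t, y0) - F (x0, y0))
      = ((y0 + t) - y0) * (py F (x0 + t, \<eta>) - py F (x0, \<eta>))"
    by (rule MVT2[where f = "\<lambda>s. F (x0 + t, s) - F (x0, s)"])
      (use \<open>t > 0\<close> in \<open>auto intro!: derivative_eq_intros has_real_derivative_py dF\<close>)
  then obtain \<eta> where "y0 < \<eta>" "\<eta> < y0 + t"
    and "(F (x0 + t, y0 + t) - F (x0, y0 + t)) - (F (x0 + t, y0) - F (x0, y0))
      = t * (py F (x0 + t, \<eta>) - py F (x0, \<eta>))"
    by auto
  moreover have "\<exists>\<xi>. x0 < \<xi> \<and> \<xi> < x0 + t \<and>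
      py F (x0 + t, \<eta>) - py F (x0, \<eta>) = ((x0 + t) - x0) * px (py F) (\<xi>, \<eta>)"
    by (rule MVT2) (use \<open>t > 0\<close> in \<open>auto intro!: has_real_derivative_px dFy\<close>)
  ultimately show ?thesis
    using that by (auto simp: algebra_simps)
qed

lemma dist_Pair_less_of_box:
  fixes x0 y0 :: real
  assumes "x0 < \<xi>" "\<xi> < x0 + t" "y0 < \<eta>" "\<eta> < y0 + t"
  shows "dist (\<xi>, \<eta>) (x0, y0) < 2 * t"
proof -
  have "dist (\<xi>, \<eta>) (x0, y0) \<le> \<bar>\<xi> - x0\<bar> + \<bar>\<eta> - y0\<bar>"
    unfolding dist_Pair_Pair dist_real_def by (metis abs_idempotent sqrt_sum_squares_le_sum_abs)
  with assms show ?thesis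
    by linarith
qed

text \<open>Schwarz's theorem: both mixed partials are limits of the same second difference quotient.\<close>

lemma px_py_commute:
  fixes F :: "real \<times> real \<Rightarrow> real"
  assumes dF: "\<And>q. F differentiable (at q)"
    and dFx: "\<And>q. px F differentiable (at q)" and dFy: "\<And>q. py F differentiable (at q)"
    and cA: "continuous_on UNIV (px (py F))" and cB: "continuous_on UNIV (py (px F))"
  shows "px (py F) p = py (px F) p"
proof -
  obtain x0 y0 where p: "p = (x0, y0)"
    by (cases p)
  have "\<bar>px (py F) p - py (px F) p\<bar> < 2 * e" if "e > 0" for e
  proof -
    obtain d1 where "d1 > 0" and d1: "\<And>q. dist q p < d1 \<Longrightarrow> \<bar>px (py F) q - px (py F) p\<bar> < e"
      using cA \<open>e > 0\<close> unfolding continuous_on_eq_continuous_at[OF open_UNIV] continuous_at_eps_delta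
      by (metis UNIV_I dist_real_def)
    obtain d2 where "d2 > 0" and d2: "\<And>q. dist q p < d2 \<Longrightarrow> \<bar>py (px F) q - py (px F) p\<bar> < e"
      using cB \<open>e > 0\<close> unfolding continuous_on_eq_continuous_at[OF open_UNIV] continuous_at_eps_delta
      by (metis UNIV_I dist_real_def)
    define t where "t = min d1 d2 / 2"
    have "t > 0"
      using \<open>d1 > 0\<close> \<open>d2 > 0\<close> by (simp add: t_def)
    have "2 * t \<le> d1" "2 * t \<le> d2"
      by (simp_all add: t_def)
    obtain \<xi> \<eta> where "x0 < \<xi>" "\<xi> < x0 + t" "y0 < \<eta>" "\<eta> < y0 + t"
      and A: "F (x0 + t, y0 + t) - F (x0 + t, y0) - F (x0, y0 + t) + F (x0, y0) = t * (t * px (py F) (\<xi>, \<eta>))"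
      using second_difference_px_py[OF dF dFy \<open>t > 0\<close>] by blast
    then have "dist (\<xi>, \<eta>) p < d1"
      using dist_Pair_less_of_box \<open>2 * t \<le> d1\<close> unfolding p by fastforce
    obtain \<xi>' \<eta>' where "x0 < \<xi>'" "\<xi>' < x0 + t" "y0 < \<eta>'" "\<eta>' < y0 + t"
      and B: "F (x0 + t, y0 + t) - F (x0 + t, y0) - F (x0, y0 + t) + F (x0, y0) = t * (t * py (px F) (\<xi>', \<eta>'))"
      using second_difference_py_px[OF dF dFx \<open>t > 0\<close>] by blast
    then have "dist (\<xi>', \<eta>') p < d2"
      using dist_Pair_less_of_box \<open>2 * t \<le> d2\<close> unfolding p by fastforce
    have "px (py F) (\<xi>, \<eta>) = py (px F) (\<xi>', \<eta>')"
      using A B \<open>t > 0\<close> by simp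
    with d1[OF \<open>dist (\<xi>, \<eta>) p < d1\<close>] d2[OF \<open>dist (\<xi>', \<eta>') p < d2\<close>] show ?thesis
      by linarith
  qed
  from this[of "\<bar>px (py F) p - py (px F) p\<bar> / 2"] show ?thesis
    by fastforce
qed

text \<open>All identities differentiated below have this shape: constant coefficients, except for the
  factor \<open>e\<^sup>2\<^sup>y\<close> coming from \<open>u = e\<^sup>2\<^sup>y \<partial>\<^sub>x\<close>. Unused slots are filled with coefficient 0.\<close>

lemma relation_partials:
  fixes H F G I J :: "real \<times> real \<Rightarrow> real"
  assumes rel: "\<And>q. d * exp (2 * snd q) * H q + cF * F q + cG * G q + cI * I q + cJ * J q = k"
    and dH: "H differentiable (at p)" and dF: "F differentiable (at p)"
    and dG: "G differentiable (at p)" and dI: "I differentiable (at p)" and dJ: "J differentiable (at p)"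
  shows "d * exp (2 * snd p) * px H p + cF * px F p + cG * px G p + cI * px I p + cJ * px J p = 0"
    and "d * (2 * exp (2 * snd p) * H p + exp (2 * snd p) * py H p)
           + cF * py F p + cG * py G p + cI * py I p + cJ * py J p = 0"
proof -
  let ?\<phi> = "\<lambda>q. d * exp (2 * snd q) * H q + cF * F q + cG * G q + cI * I q + cJ * J q"
  let ?D = "\<lambda>h. d * (exp (2 * snd p) * (fst h * px H p + snd h * py H p) + exp (2 * snd p) * (2 * snd h) * H p)
       + cF * (fst h * px F p + snd h * py F p) + cG * (fst h * px G p + snd h * py G p)
       + cI * (fst h * px I p + snd h * py I p) + cJ * (fst h * px J p + snd h * py J p)"
  have "(?\<phi> has_derivative ?D) (at p)"
    by (auto intro!: derivative_eq_intros has_derivative_partials dH dF dG dI dJ simp: algebra_simps)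
  moreover have "(?\<phi> has_derivative (\<lambda>h. 0)) (at p)"
    using rel by simp
  ultimately have "?D = (\<lambda>h. 0)"
    using has_derivative_unique by blast
  from fun_cong[OF this, of "(1, 0)"] fun_cong[OF this, of "(0, 1)"]
  show "d * exp (2 * snd p) * px H p + cF * px F p + cG * px G p + cI * px I p + cJ * px J p = 0"
    and "d * (2 * exp (2 * snd p) * H p + exp (2 * snd p) * py H p)
           + cF * py F p + cG * py G p + cI * py I p + cJ * py J p = 0"
    by (simp_all add: algebra_simps)
qed

lemma smooth_px: "smooth F \<Longrightarrow> smooth (px F)"
  and smooth_py: "smooth F \<Longrightarrow> smooth (py F)"
  unfolding smooth_def by (metis Ck.simps(2))+

lemma smooth_differentiable: "smooth F \<Longrightarrow> F differentiable (at q)"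
  unfolding smooth_def by (metis Ck.simps(2))

lemma smooth_continuous: "smooth F \<Longrightarrow> continuous_on UNIV F"
  unfolding smooth_def by (metis Ck.simps(1))

lemma smooth_px_py_commute: "smooth F \<Longrightarrow> px (py F) p = py (px F) p"
  by (rule px_py_commute) (auto intro: smooth_differentiable smooth_px smooth_py smooth_continuous)


text \<open>The components \<open>(\<L>\<beta>)(u,u)\<close>, \<open>2(\<L>\<beta>)(u,w)\<close>, \<open>(\<L>\<beta>)(w,w)\<close> of \<open>\<L>\<beta> = S\<close>, written for
  \<open>f = \<beta>(u)\<close> and \<open>g = \<beta>(w)\<close>.\<close>

locale killing_system =
  fixes a b :: real and f g :: "real \<times> real \<Rightarrow> real" and s_uu s_uw s_ww :: real
  assumes ab: "a * b = 0"
    and smooth_f: "smooth f" and smooth_g: "smooth g"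
    and eq_uu: "\<And>q. exp (2 * snd q) * px f q - (3 + a) * f q + a * g q = s_uu"
    and eq_uw: "\<And>q. exp (2 * snd q) * px g q - py f q - (2 * a - 2) * f q - (6 - 2 * a) * g q = 2 * s_uw"
    and eq_ww: "\<And>q. - py g q - (a + b - 1) * f q - (2 - a) * g q = s_ww"
begin

lemmas smoothness = smooth_differentiable smooth_px smooth_py smooth_f smooth_g

lemma px_py_f:
  "exp (2 * snd q) * px (py f) q
     = (a^2 + a*b - 3*a - 6) * f q + (4*a - a^2) * g q + (a + 3) * py f q - 2 * s_uu + a * s_ww"
proof -
  have "1 * (2 * exp (2 * snd q) * px f q + exp (2 * snd q) * py (px f) q)
      + - (3 + a) * py f q + a * py g q + 0 * py g q + 0 * py g q = 0"
    by (rule relation_partials(2)[where d = 1 and cF = "- (3 + a)" and cI = 0 and cJ = 0 and k = s_uu])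
      (use eq_uu in \<open>auto simp: algebra_simps intro: smoothness\<close>)
  moreover note eq_uu[of q] eq_ww[of q] smooth_px_py_commute[OF smooth_f, of q]
  ultimately show ?thesis
    by algebra
qed

lemma py_py_f:
  "py (py f) q = (- (a^2) - 3*a*b + 4*a + 3*b - 3) * f q + (a^2 + a*b - 5*a + 12) * g q
     + (2 - a) * py f q + (1 - a - b) * s_uu + 2*a * s_uw + (6 - 2*a) * s_ww"
proof -
  have "1 * (2 * exp (2 * snd q) * px g q + exp (2 * snd q) * py (px g) q) + -1 * py (py f) q
      + - (2*a - 2) * py f q + - (6 - 2*a) * py g q + 0 * py g q = 0"
    by (rule relation_partials(2)[where d = 1 and cF = "-1" and cG = "- (2*a - 2)" and cI = "- (6 - 2*a)"
          and cJ = 0 and k = "2 * s_uw"])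
      (use eq_uw in \<open>auto simp: algebra_simps intro: smoothness\<close>)
  moreover have "0 * exp (2 * snd q) * px g q + -1 * px (py g) q + - (a + b - 1) * px f q
      + - (2 - a) * px g q + 0 * px g q = 0"
    by (rule relation_partials(1)[where d = 0 and cF = "-1" and cG = "- (a + b - 1)" and cI = "- (2 - a)"
          and cJ = 0 and k = s_ww])
      (use eq_ww in \<open>auto simp: algebra_simps intro: smoothness\<close>)
  moreover note eq_uu[of q] eq_uw[of q] eq_ww[of q] smooth_px_py_commute[OF smooth_g, of q]
  ultimately show ?thesis
    by algebra
qed

lemma py_f:
  "24 * py f q = (48 - 24*a - 6*a*b) * f q + (24*a - 36) * g q + (14 - 8*a - 6*b + 2*a*b) * s_uu
     + (16*a - 2*a*b - 24) * s_uw + (18 - 8*a) * s_ww"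
proof -
  have "1 * (2 * exp (2 * snd q) * px (py f) q + exp (2 * snd q) * py (px (py f)) q)
      + - (a^2 + a*b - 3*a - 6) * py f q + - (4*a - a^2) * py g q + - (a + 3) * py (py f) q
      + 0 * py g q = 0"
    by (rule relation_partials(2)[where d = 1 and cF = "- (a^2 + a*b - 3*a - 6)" and cG = "- (4*a - a^2)"
          and cI = "- (a + 3)" and cJ = 0 and k = "- 2 * s_uu + a * s_ww"])
      (use px_py_f in \<open>auto simp: algebra_simps intro: smoothness\<close>)
  moreover have "0 * exp (2 * snd q) * px f q + -1 * px (py (py f)) q
      + (- (a^2) - 3*a*b + 4*a + 3*b - 3) * px f q + (a^2 + a*b - 5*a + 12) * px g q
      + (2 - a) * px (py f) q = 0"
    by (rule relation_partials(1)[where d = 0 and cF = "-1" and cG = "- (a^2) - 3*a*b + 4*a + 3*b - 3"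
          and cI = "a^2 + a*b - 5*a + 12" and cJ = "2 - a"
          and k = "- ((1 - a - b) * s_uu + 2*a * s_uw + (6 - 2*a) * s_ww)"])
      (use py_py_f in \<open>auto simp: algebra_simps intro: smoothness\<close>)
  moreover note eq_uu[of q] eq_uw[of q] eq_ww[of q] px_py_f[of q] py_py_f[of q]
    smooth_px_py_commute[OF smooth_py[OF smooth_f], of q]
  ultimately show ?thesis
    by algebra
qed

lemma linear_relations:
  "(12*a + 48) * f q + (- 12*a - 18) * g q + (4*a + 11 + 9*b) * s_uu + (12 - 8*a) * s_uw
     + (4*a - 27) * s_ww = 0"
  "(3 - 3*a - 3*b) * f q + (3*a - 18) * g q + (2*a + 2*b - 2) * s_uu - 4*a * s_uw
     + (2*a - 9) * s_ww = 0"
proof -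
  have py_f_rel: "\<And>q. 0 * exp (2 * snd q) * f q + (48 - 24*a - 6*a*b) * f q + (24*a - 36) * g q
      + -24 * py f q + 0 * g q
      = - ((14 - 8*a - 6*b + 2*a*b) * s_uu + (16*a - 2*a*b - 24) * s_uw + (18 - 8*a) * s_ww)"
    using py_f by (simp add: algebra_simps)
  have "0 * exp (2 * snd q) * px f q + (48 - 24*a - 6*a*b) * px f q + (24*a - 36) * px g q
      + -24 * px (py f) q + 0 * px g q = 0"
    by (rule relation_partials(1)[OF py_f_rel]) (auto intro: smoothness)
  moreover note eq_uu[of q] eq_uw[of q] px_py_f[of q] py_f[of q] ab
  ultimately show "(12*a + 48) * f q + (- 12*a - 18) * g q + (4*a + 11 + 9*b) * s_uu + (12 - 8*a) * s_uw
     + (4*a - 27) * s_ww = 0"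
    by algebra
  have "0 * (2 * exp (2 * snd q) * f q + exp (2 * snd q) * py f q) + (48 - 24*a - 6*a*b) * py f q
      + (24*a - 36) * py g q + -24 * py (py f) q + 0 * py g q = 0"
    by (rule relation_partials(2)[OF py_f_rel]) (auto intro: smoothness)
  moreover note eq_ww[of q] py_py_f[of q] py_f[of q] ab
  ultimately show "(3 - 3*a - 3*b) * f q + (3*a - 18) * g q + (2*a + 2*b - 2) * s_uu - 4*a * s_uw
     + (2*a - 9) * s_ww = 0"
    by algebra
qed

lemma constant_if_nondegenerate:
  assumes "5*a + 45 + 3*b \<noteq> 0"
  shows "f q = f (0, 0)" and "g q = g (0, 0)"
proof -
  note linear_relations[of q] linear_relations[of "(0, 0)"]
  then have "(5*a + 45 + 3*b) * (f q - f (0, 0)) = 0" and "(5*a + 45 + 3*b) * (g q - g (0, 0)) = 0"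
    using ab by algebra+
  with assms show "f q = f (0, 0)" and "g q = g (0, 0)"
    by simp_all
qed

lemma degenerate_compatibility:
  "a = 0 \<Longrightarrow> b = -15 \<Longrightarrow> 46 * s_uu - 6 * s_uw + 9 * s_ww = 0"
  "a = -9 \<Longrightarrow> b = 0 \<Longrightarrow> -5 * s_uu + 12 * s_uw - 9 * s_ww = 0"
  using linear_relations[of "(0, 0)"] by simp_all

end


lemma killing_system_of_killing:
  assumes "a * b = 0" and "smooth (\<beta> U)" and "smooth (\<beta> W)"
    and K: "\<And>X Y p. killing a b \<beta> X Y p = S X Y"
  shows "killing_system a b (\<beta> U) (\<beta> W) (S U U) (S U W) (S W W)"
proof
  fix q
  show "exp (2 * snd q) * px (\<beta> U) q - (3 + a) * \<beta> U q + a * \<beta> W q = S U U"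
    using K[of U U q] by (simp add: killing_def covd_def vf_def algebra_simps)
  show "exp (2 * snd q) * px (\<beta> W) q - py (\<beta> U) q - (2 * a - 2) * \<beta> U q - (6 - 2 * a) * \<beta> W q = 2 * S U W"
    using K[of U W q] by (simp add: killing_def covd_def vf_def algebra_simps)
  show "- py (\<beta> W) q - (a + b - 1) * \<beta> U q - (2 - a) * \<beta> W q = S W W"
    using K[of W W q] by (simp add: killing_def covd_def vf_def algebra_simps)
qed (use assms in auto)

lemma vf_const: "vf X (\<lambda>q. c) p = 0"
  by (cases X) (simp_all add: vf_def px_def py_def)

lemma killing_const:
  "killing a b (\<lambda>Z q. \<alpha> Z) X Y p =
    - (fst (conn a b X Y) * \<alpha> U + snd (conn a b X Y) * \<alpha> W
       + fst (conn a b Y X) * \<alpha> U + snd (conn a b Y X) * \<alpha> W) / 2"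
  by (simp add: killing_def covd_def vf_const algebra_simps)

lemma killing_const_solvable_0_neg15:
  assumes "46 * S U U - 6 * S U W + 9 * S W W = 0" and "S W U = S U W"
  shows "\<exists>\<alpha>. \<forall>X Y p. killing 0 (-15) (\<lambda>Z q. \<alpha> Z) X Y p = S X Y"
proof (intro exI allI)
  fix X Y p
  show "killing 0 (-15) (\<lambda>Z q. (\<lambda>Z. case Z of U \<Rightarrow> - S U U / 3 | W \<Rightarrow> (- S U U / 3 - S U W) / 3) Z) X Y p = S X Y"
    unfolding killing_const using assms by (cases X; cases Y) (simp_all add: field_simps)
qed

lemma killing_const_solvable_neg9_0:
  assumes "-5 * S U U + 12 * S U W - 9 * S W W = 0" and "S W U = S U W"
  shows "\<exists>\<alpha>. \<forall>X Y p. killing (-9) 0 (\<lambda>Z q. \<alpha> Z) X Y p = S X Y"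
proof (intro exI allI)
  fix X Y p
  show "killing (-9) 0 (\<lambda>Z q. (\<lambda>Z. case Z of U \<Rightarrow> (- 12 * S U U + 9 * S U W) / 18 | W \<Rightarrow> (6 * S U W - 10 * S U U) / 18) Z) X Y p = S X Y"
    unfolding killing_const using assms by (cases X; cases Y) (simp_all add: field_simps)
qed

theorem lemma12p5:
  fixes a b :: real and S :: "frame \<Rightarrow> frame \<Rightarrow> real"
  assumes "a * b = 0"
    and "\<And>X Y. S X Y = S Y X"
    and "smooth (\<beta> U)" and "smooth (\<beta> W)"
    and "\<And>X Y p. killing a b \<beta> X Y p = S X Y"
  shows "\<exists>\<alpha> :: frame \<Rightarrow> real. \<forall>X Y p. killing a b (\<lambda>Z q. \<alpha> Z) X Y p = S X Y"
proof -
  interpret killing_system a b "\<beta> U" "\<beta> W" "S U U" "S U W" "S W W"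
    using killing_system_of_killing assms(1,3-5) .
  have S_sym: "S W U = S U W"
    using assms(2) by simp
  consider "5*a + 45 + 3*b \<noteq> 0" | "a = 0" "b = -15" | "a = -9" "b = 0"
    using assms(1) by force
  then show ?thesis
  proof cases
    case 1
    then have "\<beta> = (\<lambda>Z q. \<beta> Z (0, 0))"
      using constant_if_nondegenerate by (intro ext) (metis frame.exhaust)
    then show ?thesis
      using assms(5) by metis
  next
    case 2
    then show ?thesis
      using killing_const_solvable_0_neg15 degenerate_compatibility(1) S_sym by blast
  next
    case 3
    then show ?thesis
      using killing_const_solvable_neg9_0 degenerate_compatibility(2) S_sym by blast
  qed
qed

end
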